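(* Let $\alpha\in[0,1)$, $t\ge2$, and $2=m_1=\cdots=m_s<m_{s+1}\le\cdots\le m_t$ (with $0\le s\le t$). Let $\widehat\infty[m_1,\dots,m_t]\in\mathcal{G}_n^m$ be a digraph whose strong component is $\infty[m_1,\dots,m_t]$, with $m=\sum_{i=1}^t m_i-t+1$ and common vertex $v$. Then $$\alpha^2(m-1+t^2)+\alpha^2(n-m)+2s(1-\alpha)^2\le E_\alpha(\widehat\infty[m_1,\dots,m_t])\le\alpha^2(n-m+t)^2+\alpha^2(m-1)+2s(1-\alpha)^2.$$ For $\alpha\in(0,1)$, the lower bound is attained if and only if each hanging tree is an in-tree rooted at its vertex of $\infty[m_1,\dots,m_t]$, and the upper bound is attained if and only if all $n-m$ vertices outside $\infty[m_1,\dots,m_t]$ are leaves of a single out-star centred at $v$.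
   Context: Digraphs are finite without loops or multiple arcs. A directed cycle $C_k$ ($k\ge2$) is $w_1\to\cdots\to w_k\to w_1$. The generalized $\infty$-digraph $\infty[m_1,\dots,m_t]$ ($m_i\ge2$) consists of $t$ directed cycles $C_{m_1},\dots,C_{m_t}$ sharing exactly one common vertex $v$ and otherwise vertex-disjoint; it has $\sum m_i-t+1$ vertices. $A_\alpha(G)=\alpha D^+(G)+(1-\alpha)A(G)$, with $A(G)$ the adjacency matrix and $D^+(G)$ the diagonal outdegree matrix. $E_\alpha(G)=\sum_i\lambda_{\alpha i}^2$ is the sum of squares of all eigenvalues of $A_\alpha(G)$ with multiplicity. A directed tree is a digraph whose underlying graph is a tree (a single vertex allowed); an in-tree is a directed tree with all outdegrees at most $1$, its root being the vertex of outdegree $0$. The class $\mathcal{G}_n^m$ ($2\le m\le n$): $G\in\mathcal{G}_n^m$ consists of a strongly connected digraph $G^*$ on $m$ vertices $v_1,\dots,v_m$ together with directed trees $T^{(1)},\dots,T^{(m)}$, where $T^{(i)}$ has $n_i\ge1$ vertices including $v_i$, the sets $\mathcal{V}(T^{(i)})$ are pairwise disjoint, $\mathcal{V}(T^{(i)})\cap\mathcal{V}(G^* )=\{v_i\}$, $n=\sum_i n_i$, and the arcs of $G$ are those of $G^*$ and of the $T^{(i)}$. *)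

theory Defs
  imports "Jordan_Normal_Form.Char_Poly"
begin

definition digraph :: "nat \<Rightarrow> (nat \<times> nat) set \<Rightarrow> bool" where
  "digraph n A \<longleftrightarrow> A \<subseteq> {0..<n} \<times> {0..<n} \<and> (\<forall>i. (i, i) \<notin> A)"

definition outdeg :: "(nat \<times> nat) set \<Rightarrow> nat \<Rightarrow> nat" where
  "outdeg A i = card {j. (i, j) \<in> A}"

definition A_alpha :: "real \<Rightarrow> nat \<Rightarrow> (nat \<times> nat) set \<Rightarrow> complex mat" where
  "A_alpha \<alpha> n A = mat n n (\<lambda>(i, j). complex_of_real
      ((if i = j then \<alpha> * real (outdeg A i) else 0) + (1 - \<alpha>) * (if (i, j) \<in> A then 1 else 0)))"

definition E_alpha :: "real \<Rightarrow> nat \<Rightarrow> (nat \<times> nat) set \<Rightarrow> complex" where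
  "E_alpha \<alpha> n A = (let p = char_poly (A_alpha \<alpha> n A) in
      (\<Sum>z\<in>{z. poly p z = 0}. of_nat (order z p) * z ^ 2))"

definition cycle_arcs :: "nat list \<Rightarrow> (nat \<times> nat) set" where
  "cycle_arcs c = {(c ! j, c ! (Suc j mod length c)) | j. j < length c}"

definition is_infty_digraph :: "nat list \<Rightarrow> nat \<Rightarrow> nat set \<Rightarrow> (nat \<times> nat) set \<Rightarrow> bool" where
  "is_infty_digraph ms v S B \<longleftrightarrow>
     (\<exists>cs :: nat list list. length cs = length ms \<and>
        (\<forall>i<length ms. length (cs ! i) = ms ! i \<and> distinct (cs ! i) \<and> hd (cs ! i) = v) \<and>
        (\<forall>i<length ms. \<forall>j<length ms. i \<noteq> j \<longrightarrow> set (cs ! i) \<inter> set (cs ! j) = {v}) \<and>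
        S = (\<Union>i<length ms. set (cs ! i)) \<and>
        B = (\<Union>i<length ms. cycle_arcs (cs ! i)))"

definition directed_tree :: "nat set \<Rightarrow> (nat \<times> nat) set \<Rightarrow> bool" where
  "directed_tree W B \<longleftrightarrow> finite W \<and> W \<noteq> {} \<and> B \<subseteq> W \<times> W \<and> card B + 1 = card W \<and>
     (\<forall>x\<in>W. \<forall>y\<in>W. (x, y) \<in> (B \<union> B\<inverse>)\<^sup>*)"

definition in_tree_rooted :: "nat set \<Rightarrow> (nat \<times> nat) set \<Rightarrow> nat \<Rightarrow> bool" where
  "in_tree_rooted W B r \<longleftrightarrow> directed_tree W B \<and> r \<in> W \<and> (\<forall>x\<in>W. outdeg B x \<le> 1) \<and> outdeg B r = 0"

text \<open>Membership in the class G_n^m: the strong component G* lives on S (m = card S vertices),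
  and T u is the vertex set of the hanging tree T^(u) at u in S; its arcs are the arcs of G inside T u.\<close>

definition in_class_G :: "nat \<Rightarrow> nat \<Rightarrow> (nat \<times> nat) set \<Rightarrow> nat set \<Rightarrow> (nat \<Rightarrow> nat set) \<Rightarrow> bool" where
  "in_class_G n m A S T \<longleftrightarrow>
     digraph n A \<and> 2 \<le> m \<and> m \<le> n \<and> S \<subseteq> {0..<n} \<and> card S = m \<and>
     (\<forall>x\<in>S. \<forall>y\<in>S. (x, y) \<in> (A \<inter> S \<times> S)\<^sup>*) \<and>
     (\<forall>u\<in>S. directed_tree (T u) (A \<inter> T u \<times> T u) \<and> T u \<inter> S = {u}) \<and>
     (\<forall>u\<in>S. \<forall>w\<in>S. u \<noteq> w \<longrightarrow> T u \<inter> T w = {}) \<and>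
     (\<Union>u\<in>S. T u) = {0..<n} \<and>
     A = (A \<inter> S \<times> S) \<union> (\<Union>u\<in>S. A \<inter> T u \<times> T u)"

end

(* E_alpha(G) is the trace of A_alpha(G)^2, which for a loopless digraph is alpha^2 times the sum
   of the squared outdegrees plus (1 - alpha)^2 times the number of ordered pairs joined by arcs in
   both directions.  In a digraph of G_n^m whose strong component is infty[m_1, ..., m_t], such
   pairs only come from the s two-cycles of the component, since directed trees contain none.
   Every outdegree splits into a part inside the component (t at v, 1 at its other vertices,
   0 elsewhere) and a tree part, and the tree parts add up to the n - m tree arcs.  Given these
   constraints the sum of squared outdegrees is least exactly when no tree arc leaves a component
   vertex and no vertex has two tree arcs (all trees are in-trees), and greatest exactly when all
   tree arcs leave v. *)

theory Submission
  imports Defs "Jordan_Normal_Form.Schur_Decomposition"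
begin

section \<open>Sums of squared eigenvalues\<close>

definition mat_trace :: "'a::comm_semiring_1 mat \<Rightarrow> 'a" where
  "mat_trace M = (\<Sum>i = 0..<dim_row M. M $$ (i, i))"

lemma mat_trace_mult_comm:
  assumes "A \<in> carrier_mat n k" and "B \<in> carrier_mat k n"
  shows "mat_trace (A * B) = mat_trace (B * A)"
proof -
  have "mat_trace (A * B) = (\<Sum>i = 0..<n. \<Sum>j = 0..<k. A $$ (i, j) * B $$ (j, i))"
    using assms by (auto simp: mat_trace_def scalar_prod_def intro!: sum.cong)
  also have "\<dots> = (\<Sum>j = 0..<k. \<Sum>i = 0..<n. B $$ (j, i) * A $$ (i, j))"
    by (subst sum.swap) (simp add: mult.commute)
  also have "\<dots> = mat_trace (B * A)"
    using assms by (auto simp: mat_trace_def scalar_prod_def intro!: sum.cong)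
  finally show ?thesis .
qed

lemma mat_trace_similar:
  assumes "similar_mat_wit M B P Q"
  shows "mat_trace M = mat_trace B"
proof -
  from assms obtain n where carr: "B \<in> carrier_mat n n" "P \<in> carrier_mat n n" "Q \<in> carrier_mat n n"
    and QP: "Q * P = 1\<^sub>m n" and M: "M = P * B * Q"
    unfolding similar_mat_wit_def Let_def by auto
  have "mat_trace M = mat_trace (P * (B * Q))"
    using carr M by (simp add: assoc_mult_mat[of _ n n _ n _ n])
  also have "\<dots> = mat_trace (B * Q * P)"
    using carr by (intro mat_trace_mult_comm) auto
  also have "\<dots> = mat_trace B"
    using carr QP by (simp add: assoc_mult_mat[of _ n n _ n _ n])
  finally show ?thesis .
qed

lemma similar_mat_wit_square:
  assumes "similar_mat_wit M B P Q"
  shows "similar_mat_wit (M * M) (B * B) P Q"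
proof -
  from assms obtain n where carr: "M \<in> carrier_mat n n" "B \<in> carrier_mat n n"
    "P \<in> carrier_mat n n" "Q \<in> carrier_mat n n"
    and PQ: "P * Q = 1\<^sub>m n" and QP: "Q * P = 1\<^sub>m n" and M: "M = P * B * Q"
    unfolding similar_mat_wit_def Let_def by auto
  have "M * M = P * (B * (Q * P) * (B * Q))"
    using carr M by (simp add: assoc_mult_mat[of _ n n _ n _ n])
  also have "\<dots> = P * (B * B) * Q"
    using carr QP by (simp add: assoc_mult_mat[of _ n n _ n _ n])
  finally show ?thesis
    using carr PQ QP by (auto simp: similar_mat_wit_def)
qed

lemma mat_trace_square_upper_triangular:
  assumes "B \<in> carrier_mat n n" and "upper_triangular B"
  shows "mat_trace (B * B) = (\<Sum>i = 0..<n. B $$ (i, i) ^ 2)"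
proof -
  have "(B * B) $$ (i, i) = B $$ (i, i) ^ 2" if "i < n" for i
  proof -
    have "(B * B) $$ (i, i) = (\<Sum>j = 0..<n. B $$ (i, j) * B $$ (j, i))"
      using assms that by (simp add: scalar_prod_def)
    also have "\<dots> = (\<Sum>j = 0..<n. if j = i then B $$ (i, i) ^ 2 else 0)"
    proof (intro sum.cong refl)
      fix j assume "j \<in> {0..<n}"
      then show "B $$ (i, j) * B $$ (j, i) = (if j = i then B $$ (i, i) ^ 2 else 0)"
        using assms that by (cases j i rule: linorder_cases)
          (auto simp: upper_triangular_def power2_eq_square)
    qed
    finally show ?thesis using that by simp
  qed
  then show ?thesis
    using assms by (simp add: mat_trace_def)
qed

lemma order_prod_linear_factors:
  fixes es :: "'a::idom list"
  shows "Polynomial.order z (\<Prod>e\<leftarrow>es. [:- e, 1:]) = count_list es z"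
proof (induction es)
  case (Cons e es)
  have "Polynomial.order z ([:- e, 1:] * (\<Prod>e\<leftarrow>es. [:- e, 1:]))
      = Polynomial.order z [:- e, 1:] + Polynomial.order z (\<Prod>e\<leftarrow>es. [:- e, 1:])"
    by (intro order_mult no_zero_divisors) auto
  then show ?case
    using Cons by (simp add: order_linear')
qed simp

lemma sum_list_map_eq_sum_count_list:
  fixes f :: "'a \<Rightarrow> 'b::comm_semiring_1"
  shows "sum_list (map f xs) = (\<Sum>x\<in>set xs. of_nat (count_list xs x) * f x)"
proof (induction xs)
  case (Cons y xs)
  have "(\<Sum>x\<in>insert y (set xs). of_nat (count_list (y # xs) x) * f x)
      = (\<Sum>x\<in>insert y (set xs). (if x = y then f y else 0) + of_nat (count_list xs x) * f x)"
    by (intro sum.cong) (auto simp: algebra_simps)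
  also have "\<dots> = f y + (\<Sum>x\<in>insert y (set xs). of_nat (count_list xs x) * f x)"
    by (simp add: sum.distrib)
  also have "(\<Sum>x\<in>insert y (set xs). of_nat (count_list xs x) * f x)
      = (\<Sum>x\<in>set xs. of_nat (count_list xs x) * f x)"
    by (simp add: sum.insert_if count_list_0_iff)
  finally show ?case
    using Cons by simp
qed simp

lemma sum_roots_square_char_poly:
  fixes M :: "complex mat"
  assumes M: "M \<in> carrier_mat n n"
  shows "(\<Sum>z\<in>{z. poly (char_poly M) z = 0}. of_nat (Polynomial.order z (char_poly M)) * z ^ 2)
    = mat_trace (M * M)"
proof -
  obtain es where es: "char_poly M = (\<Prod>e\<leftarrow>es. [:- e, 1:])" "length es = n"
    using char_poly_factorized[OF M] by blast
  obtain B P Q where "schur_decomposition M es = (B, P, Q)"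
    by (cases "schur_decomposition M es")
  from schur_decomposition[OF M es(1) this]
  have sim: "similar_mat_wit M B P Q" and U: "upper_triangular B" and D: "diag_mat B = es"
    by auto
  have B: "B \<in> carrier_mat n n"
    using similar_mat_witD2[OF M sim] by auto
  have roots: "{z. poly (\<Prod>e\<leftarrow>es. [:- e, 1:]) z = 0} = set es"
    by (induction es) (auto simp: poly_prod_list)
  have "(\<Sum>z\<in>{z. poly (char_poly M) z = 0}. of_nat (Polynomial.order z (char_poly M)) * z ^ 2)
      = (\<Sum>z\<in>set es. of_nat (count_list es z) * z ^ 2)"
    unfolding es(1) roots order_prod_linear_factors ..
  also have "\<dots> = (\<Sum>z\<leftarrow>es. z ^ 2)"
    by (simp add: sum_list_map_eq_sum_count_list)
  also have "\<dots> = (\<Sum>i = 0..<n. B $$ (i, i) ^ 2)"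
    using D B by (auto simp: diag_mat_def sum_list_sum_nth)
  also have "\<dots> = mat_trace (M * M)"
    using mat_trace_similar[OF similar_mat_wit_square[OF sim]]
      mat_trace_square_upper_triangular[OF B U] by simp
  finally show ?thesis .
qed

lemma E_alpha_eq_mat_trace:
  "E_alpha \<alpha> n A = mat_trace (A_alpha \<alpha> n A * A_alpha \<alpha> n A)"
  unfolding E_alpha_def Let_def
  by (rule sum_roots_square_char_poly[of _ n]) (simp add: A_alpha_def)

lemma sum_outdeg_eq_card:
  assumes "X \<subseteq> {0..<n} \<times> {0..<n}"
  shows "(\<Sum>i = 0..<n. outdeg X i) = card X"
proof -
  have "finite {j. (i, j) \<in> X}" for i
    by (rule finite_subset[of _ "{0..<n}"]) (use assms in auto)
  then have "card (SIGMA i:{0..<n}. {j. (i, j) \<in> X}) = (\<Sum>i = 0..<n. outdeg X i)"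
    unfolding outdeg_def by (intro card_SigmaI) auto
  moreover have "(SIGMA i:{0..<n}. {j. (i, j) \<in> X}) = X"
    using assms by auto
  ultimately show ?thesis
    by simp
qed

lemma real_outdeg_eq_sum_indicator:
  assumes "X \<subseteq> {0..<n} \<times> {0..<n}"
  shows "real (outdeg X i) = (\<Sum>j = 0..<n. if (i, j) \<in> X then 1 else 0)"
proof -
  have "{j. (i, j) \<in> X} = {j \<in> {0..<n}. (i, j) \<in> X}"
    using assms by auto
  then have "real (outdeg X i) = (\<Sum>j\<in>{j \<in> {0..<n}. (i, j) \<in> X}. 1)"
    unfolding outdeg_def by simp
  also have "\<dots> = (\<Sum>j = 0..<n. if (i, j) \<in> X then 1 else 0)"
    by (rule sum.inter_filter) simp
  finally show ?thesis .
qed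

lemma mat_trace_square_A_alpha:
  assumes "digraph n A"
  shows "mat_trace (A_alpha \<alpha> n A * A_alpha \<alpha> n A)
    = of_real (\<alpha>\<^sup>2 * (\<Sum>i = 0..<n. (real (outdeg A i))\<^sup>2) + (1 - \<alpha>)\<^sup>2 * real (card (A \<inter> A\<inverse>)))"
proof -
  define a where "a i j = (if i = j then \<alpha> * real (outdeg A i) else 0) + (1 - \<alpha>) * (if (i, j) \<in> A then 1 else 0)"
    for i j
  have A: "A \<subseteq> {0..<n} \<times> {0..<n}" and no_loop: "(i, i) \<notin> A" for i
    using assms by (auto simp: digraph_def)
  have D: "A \<inter> A\<inverse> \<subseteq> {0..<n} \<times> {0..<n}"
    using A by auto
  have entry: "a i j * a j i = (if i = j then \<alpha>\<^sup>2 * (real (outdeg A i))\<^sup>2 else 0)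
      + (1 - \<alpha>)\<^sup>2 * (if (i, j) \<in> A \<inter> A\<inverse> then 1 else 0)" for i j
    using no_loop by (auto simp: a_def power2_eq_square)
  have row: "(\<Sum>j = 0..<n. a i j * a j i)
      = \<alpha>\<^sup>2 * (real (outdeg A i))\<^sup>2 + (1 - \<alpha>)\<^sup>2 * real (outdeg (A \<inter> A\<inverse>) i)" if "i < n" for i
  proof -
    have "(\<Sum>j = 0..<n. a i j * a j i) = (\<Sum>j = 0..<n. if i = j then \<alpha>\<^sup>2 * (real (outdeg A i))\<^sup>2 else 0)
        + (1 - \<alpha>)\<^sup>2 * (\<Sum>j = 0..<n. if (i, j) \<in> A \<inter> A\<inverse> then 1 else 0)"
      by (simp only: entry sum.distrib sum_distrib_left)
    then show ?thesis
      using that by (simp add: real_outdeg_eq_sum_indicator[OF D])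
  qed
  have "(\<Sum>i = 0..<n. \<Sum>j = 0..<n. a i j * a j i)
      = (\<Sum>i = 0..<n. \<alpha>\<^sup>2 * (real (outdeg A i))\<^sup>2 + (1 - \<alpha>)\<^sup>2 * real (outdeg (A \<inter> A\<inverse>) i))"
    by (simp add: row)
  also have "\<dots> = \<alpha>\<^sup>2 * (\<Sum>i = 0..<n. (real (outdeg A i))\<^sup>2) + (1 - \<alpha>)\<^sup>2 * real (card (A \<inter> A\<inverse>))"
    by (simp add: sum.distrib sum_distrib_left flip: sum_outdeg_eq_card[OF D])
  finally have sum_eq: "(\<Sum>i = 0..<n. \<Sum>j = 0..<n. a i j * a j i)
      = \<alpha>\<^sup>2 * (\<Sum>i = 0..<n. (real (outdeg A i))\<^sup>2) + (1 - \<alpha>)\<^sup>2 * real (card (A \<inter> A\<inverse>))" .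
  have "mat_trace (A_alpha \<alpha> n A * A_alpha \<alpha> n A) = of_real (\<Sum>i = 0..<n. \<Sum>j = 0..<n. a i j * a j i)"
    by (simp add: mat_trace_def A_alpha_def a_def scalar_prod_def)
  then show ?thesis
    unfolding sum_eq .
qed

section \<open>Directed cycles and generalized infinity digraphs\<close>

lemma cycle_arcs_iff:
  "(a, b) \<in> cycle_arcs c \<longleftrightarrow> (\<exists>k<length c. a = c ! k \<and> b = c ! (Suc k mod length c))"
  by (auto simp: cycle_arcs_def)

lemma Suc_mod_less: "k < n \<Longrightarrow> Suc k mod n < n"
  by simp

lemma cycle_arcs_eq_image:
  "cycle_arcs c = (\<lambda>k. (c ! k, c ! (Suc k mod length c))) ` {..<length c}"
  by (auto simp: cycle_arcs_def)

lemma cycle_arcs_subset: "cycle_arcs c \<subseteq> set c \<times> set c"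
  by (auto simp: cycle_arcs_def Suc_mod_less)

lemma cycle_arc_from_nth:
  assumes "distinct c" and "k < length c"
  shows "(c ! k, y) \<in> cycle_arcs c \<longleftrightarrow> y = c ! (Suc k mod length c)"
  using assms nth_eq_iff_index_eq[OF assms(1)] by (auto simp: cycle_arcs_iff)

lemma cycle_arcs_no_loop:
  assumes "distinct c" and "2 \<le> length c"
  shows "(x, x) \<notin> cycle_arcs c"
proof
  assume "(x, x) \<in> cycle_arcs c"
  then obtain k where k: "k < length c" "c ! k = c ! (Suc k mod length c)"
    by (auto simp: cycle_arcs_iff)
  then have "k = Suc k mod length c"
    using assms by (subst (asm) nth_eq_iff_index_eq) (auto simp: Suc_mod_less)
  then show False
    using k(1) assms(2) by (cases "Suc k = length c") auto
qed

lemma cycle_arcs_digon_length: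
  assumes "distinct c" and "2 \<le> length c"
    and "(a, b) \<in> cycle_arcs c" and "(b, a) \<in> cycle_arcs c"
  shows "length c = 2"
proof -
  define L where "L = length c"
  obtain k where k: "k < L" "a = c ! k" "b = c ! (Suc k mod L)"
    using assms(3) by (auto simp: cycle_arcs_iff L_def)
  have succ: "Suc k mod L < L" "Suc (Suc k mod L) mod L < L"
    using k(1) by (simp_all add: Suc_mod_less)
  have "c ! k = c ! (Suc (Suc k mod L) mod L)"
    using assms(1,4) k succ by (simp add: cycle_arc_from_nth L_def)
  then have "k = Suc (Suc k mod L) mod L"
    using assms(1) k succ by (simp add: nth_eq_iff_index_eq L_def)
  then have "k = Suc (Suc k) mod L"
    by (simp add: mod_Suc_eq)
  then show ?thesis
    using k(1) assms(2) unfolding L_def[symmetric]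
    by (cases "Suc (Suc k) < L") (auto simp: le_mod_geq[of L "Suc (Suc k)"])
qed

lemma cycle_arcs_length_two:
  assumes "length c = 2"
  shows "cycle_arcs c = {(c ! 0, c ! 1), (c ! 1, c ! 0)}"
  using assms by (simp add: cycle_arcs_eq_image numeral_2_eq_2 lessThan_Suc insert_commute)

locale infty_digraph =
  fixes ms :: "nat list" and v :: nat and cs :: "nat list list"
  assumes cycle_length: "i < length ms \<Longrightarrow> length (cs ! i) = ms ! i"
    and cycle_length_ge2: "i < length ms \<Longrightarrow> 2 \<le> ms ! i"
    and cycle_distinct: "i < length ms \<Longrightarrow> distinct (cs ! i)"
    and cycle_hd: "i < length ms \<Longrightarrow> hd (cs ! i) = v"
    and cycles_meet: "i < length ms \<Longrightarrow> j < length ms \<Longrightarrow> i \<noteq> j \<Longrightarrow> set (cs ! i) \<inter> set (cs ! j) = {v}"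
begin

abbreviation arcs :: "(nat \<times> nat) set" where
  "arcs \<equiv> \<Union>i<length ms. cycle_arcs (cs ! i)"

lemma cycle_nonempty: "i < length ms \<Longrightarrow> cs ! i \<noteq> []"
  using cycle_length[of i] cycle_length_ge2[of i] by auto

lemma cycle_nth0: "i < length ms \<Longrightarrow> cs ! i ! 0 = v"
  using cycle_hd[of i] hd_conv_nth[OF cycle_nonempty] by simp

lemma cycle_nth1_mem: "i < length ms \<Longrightarrow> cs ! i ! 1 \<in> set (cs ! i)"
  using cycle_length cycle_length_ge2 by (intro nth_mem) fastforce

lemma cycle_nth1_neq: "i < length ms \<Longrightarrow> cs ! i ! 1 \<noteq> v"
  using cycle_nth0[of i] cycle_distinct[of i] cycle_length[of i] cycle_length_ge2[of i]
  by (auto simp: nth_eq_iff_index_eq)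

lemma cycle_nth1_inj:
  assumes "i < length ms" and "j < length ms" and "cs ! i ! 1 = cs ! j ! 1"
  shows "i = j"
proof (rule ccontr)
  assume "i \<noteq> j"
  have "cs ! i ! 1 \<in> set (cs ! i) \<inter> set (cs ! j)"
    using cycle_nth1_mem[OF assms(1)] cycle_nth1_mem[OF assms(2)] assms(3) by simp
  then show False
    using cycles_meet[OF assms(1,2) \<open>i \<noteq> j\<close>] cycle_nth1_neq[OF assms(1)] by simp
qed

lemma arc_in_cycle:
  assumes "(x, y) \<in> arcs" and "i < length ms" and "x \<in> set (cs ! i)" and "x \<noteq> v"
  shows "(x, y) \<in> cycle_arcs (cs ! i)"
proof -
  obtain j where j: "j < length ms" "(x, y) \<in> cycle_arcs (cs ! j)"
    using assms(1) by blast
  then have "x \<in> set (cs ! j)"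
    using cycle_arcs_subset by blast
  then have "j = i"
    using cycles_meet[OF j(1) assms(2)] assms(3,4) by blast
  then show ?thesis
    using j by simp
qed

lemma no_loop: "(x, x) \<notin> arcs"
  using cycle_arcs_no_loop cycle_distinct cycle_length cycle_length_ge2 by fastforce

lemma center_mem:
  assumes "ms \<noteq> []"
  shows "v \<in> (\<Union>i<length ms. set (cs ! i))"
proof -
  have "v \<in> set (cs ! 0)"
    using assms hd_in_set[OF cycle_nonempty[of 0]] cycle_hd[of 0] by simp
  then show ?thesis
    using assms by blast
qed

lemma out_neighbours_center: "{y. (v, y) \<in> arcs} = (\<lambda>i. cs ! i ! 1) ` {..<length ms}"
proof -
  have "(v, y) \<in> cycle_arcs (cs ! i) \<longleftrightarrow> y = cs ! i ! 1" if "i < length ms" for i y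
  proof -
    have "0 < length (cs ! i)" and "Suc 0 mod length (cs ! i) = 1"
      using cycle_length[OF that] cycle_length_ge2[OF that] by auto
    then show ?thesis
      using cycle_arc_from_nth[OF cycle_distinct[OF that], of 0 y] cycle_nth0[OF that] by simp
  qed
  then show ?thesis
    by blast
qed

lemma outdeg_center: "outdeg arcs v = length ms"
proof -
  have "inj_on (\<lambda>i. cs ! i ! 1) {..<length ms}"
    using cycle_nth1_inj by (auto simp: inj_on_def)
  then show ?thesis
    unfolding outdeg_def out_neighbours_center by (simp add: card_image)
qed

lemma outdeg_noncenter:
  assumes "i < length ms" and "x \<in> set (cs ! i)" and "x \<noteq> v"
  shows "outdeg arcs x = 1"
proof -
  obtain k where k: "k < length (cs ! i)" "x = cs ! i ! k"
    using assms(2) by (metis in_set_conv_nth)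
  have "(x, y) \<in> arcs \<longleftrightarrow> y = cs ! i ! (Suc k mod length (cs ! i))" for y
  proof
    assume "(x, y) \<in> arcs"
    then show "y = cs ! i ! (Suc k mod length (cs ! i))"
      using arc_in_cycle[OF _ assms] cycle_arc_from_nth[OF cycle_distinct[OF assms(1)] k(1)] k(2)
      by simp
  next
    assume "y = cs ! i ! (Suc k mod length (cs ! i))"
    then show "(x, y) \<in> arcs"
      using cycle_arc_from_nth[OF cycle_distinct[OF assms(1)] k(1)] k(2) assms(1) by blast
  qed
  then have "{y. (x, y) \<in> arcs} = {cs ! i ! (Suc k mod length (cs ! i))}"
    by blast
  then show ?thesis
    by (simp add: outdeg_def)
qed

lemma digon_arcs:
  "arcs \<inter> arcs\<inverse> = (\<Union>i\<in>{i. i < length ms \<and> ms ! i = 2}. {(v, cs ! i ! 1), (cs ! i ! 1, v)})"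
proof (intro equalityI subsetI)
  fix p assume p: "p \<in> arcs \<inter> arcs\<inverse>"
  obtain x y i j where xy: "p = (x, y)" and i: "i < length ms" "(x, y) \<in> cycle_arcs (cs ! i)"
    and j: "j < length ms" "(y, x) \<in> cycle_arcs (cs ! j)"
    using p by auto
  have "i = j"
  proof (rule ccontr)
    assume "i \<noteq> j"
    then have "x = v" "y = v"
      using cycles_meet[OF i(1) j(1)] cycle_arcs_subset i(2) j(2) by blast+
    then show False
      using i no_loop by blast
  qed
  then have two: "ms ! i = 2"
    using cycle_arcs_digon_length[OF cycle_distinct[OF i(1)] _ i(2)] j(2)
      cycle_length[OF i(1)] cycle_length_ge2[OF i(1)] by simp
  then have "p = (v, cs ! i ! 1) \<or> p = (cs ! i ! 1, v)"
    using i xy cycle_arcs_length_two[of "cs ! i"] cycle_length[OF i(1)] cycle_nth0[OF i(1)] by auto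
  then show "p \<in> (\<Union>i\<in>{i. i < length ms \<and> ms ! i = 2}. {(v, cs ! i ! 1), (cs ! i ! 1, v)})"
    using i(1) two by blast
next
  fix p assume "p \<in> (\<Union>i\<in>{i. i < length ms \<and> ms ! i = 2}. {(v, cs ! i ! 1), (cs ! i ! 1, v)})"
  then obtain i where i: "i < length ms" "ms ! i = 2" and p: "p \<in> {(v, cs ! i ! 1), (cs ! i ! 1, v)}"
    by blast
  have "cycle_arcs (cs ! i) = {(v, cs ! i ! 1), (cs ! i ! 1, v)}"
    using cycle_arcs_length_two[of "cs ! i"] cycle_length[OF i(1)] i(2) cycle_nth0[OF i(1)] by simp
  then show "p \<in> arcs \<inter> arcs\<inverse>"
    using i(1) p by blast
qed

lemma card_digon_arcs: "card (arcs \<inter> arcs\<inverse>) = 2 * card {i. i < length ms \<and> ms ! i = 2}"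
proof -
  let ?I = "{i. i < length ms \<and> ms ! i = 2}"
  have "card (arcs \<inter> arcs\<inverse>) = (\<Sum>i\<in>?I. card {(v, cs ! i ! 1), (cs ! i ! 1, v)})"
    unfolding digon_arcs
    by (rule card_UN_disjoint) (use cycle_nth1_inj cycle_nth1_neq in auto)
  also have "\<dots> = (\<Sum>i\<in>?I. 2)"
    using cycle_nth1_neq by (intro sum.cong) auto
  finally show ?thesis
    by simp
qed

end

lemma is_infty_digraphE:
  assumes "is_infty_digraph ms v S B" and "\<forall>i<length ms. 2 \<le> ms ! i"
  obtains cs where "infty_digraph ms v cs" and "S = (\<Union>i<length ms. set (cs ! i))"
    and "B = (\<Union>i<length ms. cycle_arcs (cs ! i))"
proof -
  from assms(1) obtain cs where "length cs = length ms"
    and "\<forall>i<length ms. length (cs ! i) = ms ! i \<and> distinct (cs ! i) \<and> hd (cs ! i) = v"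
    and "\<forall>i<length ms. \<forall>j<length ms. i \<noteq> j \<longrightarrow> set (cs ! i) \<inter> set (cs ! j) = {v}"
    and "S = (\<Union>i<length ms. set (cs ! i))" and "B = (\<Union>i<length ms. cycle_arcs (cs ! i))"
    unfolding is_infty_digraph_def by blast
  moreover from calculation have "infty_digraph ms v cs"
    using assms(2) by (simp add: infty_digraph_def)
  ultimately show ?thesis
    using that by blast
qed

section \<open>Directed trees contain no two-cycles\<close>

definition sym_reach :: "('a \<times> 'a) set \<Rightarrow> 'a set \<Rightarrow> 'a set" where
  "sym_reach F X = (F \<union> F\<inverse>)\<^sup>* `` X"

lemma sym_reach_least:
  assumes "X \<subseteq> Y" and "(F \<union> F\<inverse>) `` Y \<subseteq> Y"
  shows "sym_reach F X \<subseteq> Y"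
  using Image_mono[OF order_refl assms(1), of "(F \<union> F\<inverse>)\<^sup>*"] Image_closed_trancl[OF assms(2)]
  by (simp add: sym_reach_def)

lemma sym_reach_closed: "(F \<union> F\<inverse>) `` sym_reach F X \<subseteq> sym_reach F X"
proof
  fix z assume "z \<in> (F \<union> F\<inverse>) `` sym_reach F X"
  then obtain x y where "x \<in> X" "(x, y) \<in> (F \<union> F\<inverse>)\<^sup>*" "(y, z) \<in> F \<union> F\<inverse>"
    by (auto simp: sym_reach_def)
  then show "z \<in> sym_reach F X"
    unfolding sym_reach_def by (blast intro: rtrancl_into_rtrancl)
qed

lemma sym_reach_mono: "X \<subseteq> Y \<Longrightarrow> sym_reach F X \<subseteq> sym_reach F Y"
  by (auto simp: sym_reach_def)

lemma subset_sym_reach: "X \<subseteq> sym_reach F X"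
  by (auto simp: sym_reach_def)

lemma sym_reach_insert_least:
  assumes "sym_reach F X \<subseteq> Y" and "(F \<union> F\<inverse>) `` Y \<subseteq> Y" and "a \<in> Y \<longleftrightarrow> b \<in> Y"
  shows "sym_reach (insert (a, b) F) X \<subseteq> Y"
proof (rule sym_reach_least)
  show "X \<subseteq> Y"
    using subset_sym_reach[of X F] assms(1) by (rule order_trans)
  show "(insert (a, b) F \<union> (insert (a, b) F)\<inverse>) `` Y \<subseteq> Y"
  proof
    fix z assume "z \<in> (insert (a, b) F \<union> (insert (a, b) F)\<inverse>) `` Y"
    then obtain y where "y \<in> Y" and "(y, z) \<in> F \<union> F\<inverse> \<or> (y, z) = (a, b) \<or> (y, z) = (b, a)"
      by blast
    then show "z \<in> Y"
      using assms(2,3) by blast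
  qed
qed

lemma sym_reach_subset_Field: "sym_reach F X \<subseteq> X \<union> Field F"
  by (rule sym_reach_least) (auto intro: FieldI1 FieldI2)

lemma finite_sym_reach: "finite F \<Longrightarrow> finite X \<Longrightarrow> finite (sym_reach F X)"
  by (rule finite_subset[OF sym_reach_subset_Field]) (simp add: finite_Field)

lemma card_sym_reach:
  assumes "finite F" and "finite X"
  shows "card (sym_reach F X) \<le> card X + card F"
  using assms
proof (induction F arbitrary: X rule: finite_induct)
  case empty
  then show ?case
    by (simp add: sym_reach_def)
next
  case (insert e F)
  obtain a b where e: "e = (a, b)"
    by fastforce
  \<comment> \<open>The new arc can only add its far endpoint to what is already reachable.\<close>
  consider "a \<in> sym_reach F X" | "b \<in> sym_reach F X" | "a \<notin> sym_reach F X" "b \<notin> sym_reach F X"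
    by blast
  then obtain Z where Z: "finite Z" "card Z \<le> card X + 1" "sym_reach (insert e F) X \<subseteq> sym_reach F Z"
  proof cases
    case 1
    have "sym_reach (insert e F) X \<subseteq> sym_reach F (insert b X)"
      unfolding e using 1 sym_reach_mono[of X "insert b X" F] subset_sym_reach[of "insert b X" F]
      by (intro sym_reach_insert_least sym_reach_closed) auto
    then show ?thesis
      using insert.prems that[of "insert b X"] by (simp add: card_insert_if)
  next
    case 2
    have "sym_reach (insert e F) X \<subseteq> sym_reach F (insert a X)"
      unfolding e using 2 sym_reach_mono[of X "insert a X" F] subset_sym_reach[of "insert a X" F]
      by (intro sym_reach_insert_least sym_reach_closed) auto
    then show ?thesis
      using insert.prems that[of "insert a X"] by (simp add: card_insert_if)
  next
    case 3
    then have "sym_reach (insert e F) X \<subseteq> sym_reach F X"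
      unfolding e by (intro sym_reach_insert_least sym_reach_closed) auto
    then show ?thesis
      using insert.prems that[of X] by simp
  qed
  have "card (sym_reach (insert e F) X) \<le> card (sym_reach F Z)"
    using Z insert.hyps(1) by (intro card_mono finite_sym_reach) auto
  also have "\<dots> \<le> card X + card (insert e F)"
    using insert.IH[OF Z(1)] Z(2) insert.hyps by simp
  finally show ?case .
qed

lemma directed_tree_no_digon:
  assumes "directed_tree W B"
  shows "B \<inter> B\<inverse> = {}"
proof (rule ccontr)
  assume "B \<inter> B\<inverse> \<noteq> {}"
  then obtain x y where xy: "(x, y) \<in> B" and yx: "(y, x) \<in> B"
    by auto
  from assms have W: "finite W" "W \<noteq> {}" and BW: "B \<subseteq> W \<times> W" and card_B: "card B + 1 = card W"
    and conn: "\<forall>a\<in>W. \<forall>b\<in>W. (a, b) \<in> (B \<union> B\<inverse>)\<^sup>*"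
    by (auto simp: directed_tree_def)
  have fin: "finite B"
    using BW W by (meson finite_SigmaI finite_subset)
  define B' where "B' = B - {(y, x)}"
  \<comment> \<open>Dropping one arc of a digon keeps the underlying graph connected.\<close>
  have "B \<union> B\<inverse> \<subseteq> (B' \<union> B'\<inverse>)\<^sup>*"
    using xy by (auto simp: B'_def)
  then have "(B \<union> B\<inverse>)\<^sup>* \<subseteq> (B' \<union> B'\<inverse>)\<^sup>*"
    using rtrancl_subset_rtrancl by blast
  moreover obtain r where r: "r \<in> W"
    using W by auto
  ultimately have "W \<subseteq> sym_reach B' {r}"
    using conn by (auto simp: sym_reach_def)
  then have "card W \<le> card (sym_reach B' {r})"
    using fin by (intro card_mono finite_sym_reach) (auto simp: B'_def)
  also have "\<dots> \<le> 1 + card B'"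
    using card_sym_reach[of B' "{r}"] fin by (simp add: B'_def)
  also have "card B' = card B - 1"
    using yx fin by (simp add: B'_def)
  finally show False
    using card_B yx fin card_gt_0_iff[of B] by auto
qed

section \<open>Sums of squares of natural numbers\<close>

lemma sum_squares_le_square_sum:
  fixes e :: "'a \<Rightarrow> nat"
  assumes "finite V"
  shows "(\<Sum>x\<in>V. (e x)\<^sup>2) \<le> (\<Sum>x\<in>V. e x)\<^sup>2"
  using assms
proof (induction V rule: finite_induct)
  case (insert a V)
  have "(e a)\<^sup>2 + (\<Sum>x\<in>V. (e x)\<^sup>2) \<le> (e a)\<^sup>2 + (\<Sum>x\<in>V. e x)\<^sup>2"
    using insert.IH by simp
  also have "\<dots> \<le> (e a + (\<Sum>x\<in>V. e x))\<^sup>2"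
    by (simp add: power2_sum)
  finally show ?case
    using insert.hyps by simp
qed simp

lemma sum_square_add_eq:
  fixes c e :: "'a \<Rightarrow> nat"
  assumes "finite V" and "v \<in> V" and "\<forall>x\<in>V - {v}. c x \<le> 1"
  shows "(\<Sum>x\<in>V. (c x + e x)\<^sup>2)
    = (c v)\<^sup>2 + (\<Sum>x\<in>V - {v}. c x) + (\<Sum>x\<in>V. e x) + (\<Sum>x\<in>V. 2 * c x * e x + e x * (e x - 1))"
proof -
  have "(c x + e x)\<^sup>2 = (c x)\<^sup>2 + e x + (2 * c x * e x + e x * (e x - 1))" for x
    by (cases "e x") (auto simp: power2_eq_square algebra_simps)
  then have "(\<Sum>x\<in>V. (c x + e x)\<^sup>2)
      = (\<Sum>x\<in>V. (c x)\<^sup>2) + (\<Sum>x\<in>V. e x) + (\<Sum>x\<in>V. 2 * c x * e x + e x * (e x - 1))"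
    by (simp add: sum.distrib)
  moreover have "(\<Sum>x\<in>V - {v}. (c x)\<^sup>2) = (\<Sum>x\<in>V - {v}. c x)"
    using assms(3) by (intro sum.cong) (auto simp: le_Suc_eq power2_eq_square)
  ultimately show ?thesis
    using assms(1,2) by (simp add: sum.remove)
qed

lemma sum_square_add_le:
  fixes c e :: "'a \<Rightarrow> nat"
  assumes "finite V" and "v \<in> V" and "\<forall>x\<in>V - {v}. c x \<le> 1" and "2 \<le> c v"
  shows "(\<Sum>x\<in>V. (c x + e x)\<^sup>2) \<le> (c v + (\<Sum>x\<in>V. e x))\<^sup>2 + (\<Sum>x\<in>V - {v}. c x)"
    and "(\<Sum>x\<in>V. (c x + e x)\<^sup>2) = (c v + (\<Sum>x\<in>V. e x))\<^sup>2 + (\<Sum>x\<in>V - {v}. c x)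
      \<longleftrightarrow> e v = (\<Sum>x\<in>V. e x)"
proof -
  define W where "W = V - {v}"
  define L where "L = (\<Sum>x\<in>W. e x)"
  have split: "(\<Sum>x\<in>V. f x) = f v + (\<Sum>x\<in>W. f x)" for f :: "'a \<Rightarrow> nat"
    using assms(1,2) by (simp add: W_def sum.remove)
  have W_bound: "(\<Sum>x\<in>W. (c x + e x)\<^sup>2) \<le> (\<Sum>x\<in>W. c x) + 2 * L + L\<^sup>2"
  proof -
    have "(c x + e x)\<^sup>2 \<le> c x + 2 * e x + (e x)\<^sup>2" if "x \<in> W" for x
    proof -
      have "c x \<le> 1"
        using assms(3) that by (simp add: W_def)
      then have "c x = 0 \<or> c x = 1"
        by linarith
      then show ?thesis
        by (auto simp: power2_eq_square algebra_simps)
    qed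
    then have "(\<Sum>x\<in>W. (c x + e x)\<^sup>2) \<le> (\<Sum>x\<in>W. c x + 2 * e x + (e x)\<^sup>2)"
      by (rule sum_mono)
    also have "\<dots> \<le> (\<Sum>x\<in>W. c x) + 2 * L + L\<^sup>2"
      using sum_squares_le_square_sum[of W e] assms(1)
      by (simp add: L_def W_def sum.distrib sum_distrib_left)
    finally show ?thesis .
  qed
  \<comment> \<open>All the slack sits in the cross term 2 L \<le> 2 (c v + e v) L, which is tight only for L = 0.\<close>
  have square: "(c v + (\<Sum>x\<in>V. e x))\<^sup>2 = (c v + e v)\<^sup>2 + 2 * (c v + e v) * L + L\<^sup>2"
    unfolding split[of e] L_def by (simp add: power2_eq_square algebra_simps)
  have cross: "2 * L \<le> 2 * (c v + e v) * L"
    using assms(4) by simp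
  show "(\<Sum>x\<in>V. (c x + e x)\<^sup>2) \<le> (c v + (\<Sum>x\<in>V. e x))\<^sup>2 + (\<Sum>x\<in>V - {v}. c x)"
    using W_bound cross square split[of "\<lambda>x. (c x + e x)\<^sup>2"] unfolding W_def[symmetric] by linarith
  show "(\<Sum>x\<in>V. (c x + e x)\<^sup>2) = (c v + (\<Sum>x\<in>V. e x))\<^sup>2 + (\<Sum>x\<in>V - {v}. c x)
      \<longleftrightarrow> e v = (\<Sum>x\<in>V. e x)"
  proof
    assume eq: "(\<Sum>x\<in>V. (c x + e x)\<^sup>2) = (c v + (\<Sum>x\<in>V. e x))\<^sup>2 + (\<Sum>x\<in>V - {v}. c x)"
    have "L = 0"
    proof (rule ccontr)
      assume "L \<noteq> 0"
      then have "2 * L < 2 * (c v + e v) * L"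
        using assms(4) by simp
      then show False
        using eq W_bound square split[of "\<lambda>x. (c x + e x)\<^sup>2"] unfolding W_def[symmetric] by linarith
    qed
    then show "e v = (\<Sum>x\<in>V. e x)"
      using split[of e] L_def by simp
  next
    assume "e v = (\<Sum>x\<in>V. e x)"
    then have "\<forall>x\<in>W. e x = 0"
      using split[of e] assms(1) by (simp add: W_def)
    then have "(\<Sum>x\<in>W. (c x + e x)\<^sup>2) = (\<Sum>x\<in>W. c x)"
      using assms(3) by (intro sum.cong) (auto simp: W_def le_Suc_eq power2_eq_square)
    then show "(\<Sum>x\<in>V. (c x + e x)\<^sup>2) = (c v + (\<Sum>x\<in>V. e x))\<^sup>2 + (\<Sum>x\<in>V - {v}. c x)"
      using split[of "\<lambda>x. (c x + e x)\<^sup>2"] \<open>e v = (\<Sum>x\<in>V. e x)\<close> by (simp add: W_def)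
  qed
qed

section \<open>The class G_n^m\<close>

locale class_G =
  fixes n m :: nat and A :: "(nat \<times> nat) set" and S :: "nat set" and T :: "nat \<Rightarrow> nat set"
  assumes in_class_G: "in_class_G n m A S T"
begin

lemma
  shows digraph: "digraph n A"
    and core_subset: "S \<subseteq> {0..<n}"
    and card_core: "card S = m"
    and m_le_n: "m \<le> n"
    and two_le_m: "2 \<le> m"
    and tree: "u \<in> S \<Longrightarrow> directed_tree (T u) (A \<inter> T u \<times> T u)"
    and tree_meets_core: "u \<in> S \<Longrightarrow> T u \<inter> S = {u}"
    and trees_disjoint: "u \<in> S \<Longrightarrow> w \<in> S \<Longrightarrow> u \<noteq> w \<Longrightarrow> T u \<inter> T w = {}"
    and trees_cover: "(\<Union>u\<in>S. T u) = {0..<n}"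
    and arcs_split: "A = (A \<inter> S \<times> S) \<union> (\<Union>u\<in>S. A \<inter> T u \<times> T u)"
  using in_class_G by (auto simp: in_class_G_def)

lemma arcs_subset: "A \<subseteq> {0..<n} \<times> {0..<n}"
  using digraph by (simp add: digraph_def)

lemma finite_arcs: "finite A"
  using arcs_subset by (rule finite_subset) simp

lemma tree_arcs_eq: "A - S \<times> S = (\<Union>u\<in>S. A \<inter> T u \<times> T u)"
proof -
  have "(x, y) \<notin> S \<times> S" if "u \<in> S" "(x, y) \<in> A \<inter> T u \<times> T u" for u x y
  proof
    assume "(x, y) \<in> S \<times> S"
    then have "x = u" "y = u"
      using that tree_meets_core[OF that(1)] by blast+
    then show False
      using that(2) digraph by (simp add: digraph_def)
  qed
  then show ?thesis
    using arcs_split by blast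
qed

lemma tree_arc_iff:
  assumes "u \<in> S" and "x \<in> T u"
  shows "(x, y) \<in> A - S \<times> S \<longleftrightarrow> (x, y) \<in> A \<inter> T u \<times> T u"
  using assms trees_disjoint unfolding tree_arcs_eq by blast

lemma outdeg_tree:
  assumes "u \<in> S" and "x \<in> T u"
  shows "outdeg (A \<inter> T u \<times> T u) x = outdeg (A - S \<times> S) x"
  using tree_arc_iff[OF assms] by (simp add: outdeg_def)

lemma outdeg_split: "outdeg A x = outdeg (A \<inter> S \<times> S) x + outdeg (A - S \<times> S) x"
proof -
  have "finite {y. (x, y) \<in> A}"
    using arcs_subset by (rule_tac finite_subset[of _ "{0..<n}"]) auto
  then have "card ({y. (x, y) \<in> A \<inter> S \<times> S} \<union> {y. (x, y) \<in> A - S \<times> S})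
      = outdeg (A \<inter> S \<times> S) x + outdeg (A - S \<times> S) x"
    unfolding outdeg_def by (intro card_Un_disjoint) (auto elim: finite_subset[rotated])
  moreover have "{y. (x, y) \<in> A \<inter> S \<times> S} \<union> {y. (x, y) \<in> A - S \<times> S} = {y. (x, y) \<in> A}"
    by blast
  ultimately show ?thesis
    by (simp add: outdeg_def)
qed

lemma card_tree_arcs: "card (A - S \<times> S) = n - m"
proof -
  have finite_tree: "u \<in> S \<Longrightarrow> finite (T u)" for u
    using tree by (simp add: directed_tree_def)
  have root_in_tree: "u \<in> S \<Longrightarrow> u \<in> T u" for u
    using tree_meets_core by blast
  have finite_core: "finite S"
    using core_subset finite_subset by blast
  have "card (A - S \<times> S) = (\<Sum>u\<in>S. card (A \<inter> T u \<times> T u))"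
    unfolding tree_arcs_eq using finite_core finite_arcs trees_disjoint
    by (intro card_UN_disjoint) auto
  also have "\<dots> = (\<Sum>u\<in>S. card (T u) - 1)"
  proof (rule sum.cong)
    fix u assume "u \<in> S"
    then have "card (A \<inter> T u \<times> T u) + 1 = card (T u)"
      using tree by (simp add: directed_tree_def)
    then show "card (A \<inter> T u \<times> T u) = card (T u) - 1"
      by simp
  qed simp
  also have "\<dots> = (\<Sum>u\<in>S. card (T u)) - card S"
  proof -
    have "1 \<le> card (T u)" if "u \<in> S" for u
      using finite_tree[OF that] root_in_tree[OF that] by (metis One_nat_def Suc_leI card_gt_0_iff empty_iff)
    then show ?thesis
      using sum_subtractf_nat[of S "\<lambda>_. 1" "\<lambda>u. card (T u)"] by simp
  qed
  also have "(\<Sum>u\<in>S. card (T u)) = n"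
    using card_UN_disjoint[OF finite_core, of T] finite_tree trees_disjoint trees_cover by simp
  finally show ?thesis
    using card_core by simp
qed

lemma digons_in_core: "A \<inter> A\<inverse> = (A \<inter> S \<times> S) \<inter> (A \<inter> S \<times> S)\<inverse>"
proof -
  have "(x, y) \<notin> A - S \<times> S" if "(x, y) \<in> A" "(y, x) \<in> A" for x y
  proof
    assume "(x, y) \<in> A - S \<times> S"
    then obtain u where u: "u \<in> S" "(x, y) \<in> A \<inter> T u \<times> T u"
      unfolding tree_arcs_eq by blast
    then have "(y, x) \<in> A \<inter> T u \<times> T u"
      using that(2) by blast
    then show False
      using u directed_tree_no_digon[OF tree[OF u(1)]] by blast
  qed
  then show ?thesis
    by blast
qed

lemma in_trees_iff:
  "(\<forall>u\<in>S. in_tree_rooted (T u) (A \<inter> T u \<times> T u) u)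
    \<longleftrightarrow> (\<forall>x\<in>{0..<n}. outdeg (A - S \<times> S) x \<le> 1 \<and> (x \<in> S \<longrightarrow> outdeg (A - S \<times> S) x = 0))"
proof
  assume in_trees: "\<forall>u\<in>S. in_tree_rooted (T u) (A \<inter> T u \<times> T u) u"
  show "\<forall>x\<in>{0..<n}. outdeg (A - S \<times> S) x \<le> 1 \<and> (x \<in> S \<longrightarrow> outdeg (A - S \<times> S) x = 0)"
  proof
    fix x assume "x \<in> {0..<n}"
    then obtain u where u: "u \<in> S" "x \<in> T u"
      using trees_cover by blast
    moreover have "x \<in> S \<Longrightarrow> x = u"
      using u tree_meets_core by blast
    moreover have "in_tree_rooted (T u) (A \<inter> T u \<times> T u) u"
      using in_trees u(1) by blast
    ultimately show "outdeg (A - S \<times> S) x \<le> 1 \<and> (x \<in> S \<longrightarrow> outdeg (A - S \<times> S) x = 0)"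
      using outdeg_tree[OF u] by (auto simp: in_tree_rooted_def)
  qed
next
  assume degrees: "\<forall>x\<in>{0..<n}. outdeg (A - S \<times> S) x \<le> 1 \<and> (x \<in> S \<longrightarrow> outdeg (A - S \<times> S) x = 0)"
  show "\<forall>u\<in>S. in_tree_rooted (T u) (A \<inter> T u \<times> T u) u"
  proof
    fix u assume u: "u \<in> S"
    have "T u \<subseteq> {0..<n}" and "u \<in> T u"
      using u trees_cover tree_meets_core by blast+
    then show "in_tree_rooted (T u) (A \<inter> T u \<times> T u) u"
      using degrees u tree[OF u] outdeg_tree[OF u] by (auto simp: in_tree_rooted_def)
  qed
qed

lemma out_star_iff:
  assumes "v \<in> S"
  shows "outdeg (A - S \<times> S) v = n - m \<longleftrightarrow> A - S \<times> S = {v} \<times> ({0..<n} - S)"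
proof
  assume center: "outdeg (A - S \<times> S) v = n - m"
  have R: "A - S \<times> S \<subseteq> {0..<n} \<times> {0..<n}"
    using arcs_subset by blast
  have v: "v \<in> {0..<n}"
    using assms core_subset by blast
  have "outdeg (A - S \<times> S) v + (\<Sum>x\<in>{0..<n} - {v}. outdeg (A - S \<times> S) x) = n - m"
    using sum_outdeg_eq_card[OF R] card_tree_arcs v by (simp add: sum.remove)
  then have others: "outdeg (A - S \<times> S) x = 0" if "x \<in> {0..<n} - {v}" for x
    using center that by simp
  have "(x, y) \<notin> A - S \<times> S" if "x \<noteq> v" for x y
  proof
    assume xy: "(x, y) \<in> A - S \<times> S"
    have "finite {y. (x, y) \<in> A - S \<times> S}"
      using R by (rule_tac finite_subset[of _ "{0..<n}"]) auto
    moreover have "outdeg (A - S \<times> S) x = 0"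
      using R xy that others by blast
    ultimately have "{y. (x, y) \<in> A - S \<times> S} = {}"
      unfolding outdeg_def using card_0_eq by blast
    then show False
      using xy by blast
  qed
  then have sub: "A - S \<times> S \<subseteq> {v} \<times> ({0..<n} - S)"
    using R assms by fastforce
  have "card ({v} \<times> ({0..<n} - S)) = n - m"
    using card_core core_subset by (simp add: card_Diff_subset finite_subset)
  then show "A - S \<times> S = {v} \<times> ({0..<n} - S)"
    using card_tree_arcs by (intro card_subset_eq sub) auto
next
  assume "A - S \<times> S = {v} \<times> ({0..<n} - S)"
  then have "{y. (v, y) \<in> A - S \<times> S} = {0..<n} - S"
    by blast
  then show "outdeg (A - S \<times> S) v = n - m"
    using card_core core_subset by (simp add: outdeg_def card_Diff_subset finite_subset)
qed

end

section \<open>Outdegrees when the strong component is an infinity digraph\<close>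

locale infty_hat = infty_digraph ms v cs + class_G n m A S T
  for ms v cs n m A S T +
  assumes core_vertices: "S = (\<Union>i<length ms. set (cs ! i))"
    and core_arcs: "A \<inter> S \<times> S = (\<Union>i<length ms. cycle_arcs (cs ! i))"
    and two_cycles: "2 \<le> length ms"
begin

lemma center_in_core: "v \<in> S"
proof -
  have "ms \<noteq> []"
    using two_cycles by auto
  then show ?thesis
    using center_mem core_vertices by simp
qed

lemma outdeg_core_center: "outdeg (A \<inter> S \<times> S) v = length ms"
  using outdeg_center core_arcs by simp

lemma outdeg_core:
  assumes "x \<noteq> v"
  shows "outdeg (A \<inter> S \<times> S) x = (if x \<in> S then 1 else 0)"
proof (cases "x \<in> S")
  case True
  then obtain i where "i < length ms" "x \<in> set (cs ! i)"
    using core_vertices by blast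
  then show ?thesis
    using outdeg_noncenter assms True core_arcs by simp
next
  case False
  then show ?thesis
    by (simp add: outdeg_def)
qed

lemma sum_outdeg_core_noncenter: "(\<Sum>x\<in>{0..<n} - {v}. outdeg (A \<inter> S \<times> S) x) = m - 1"
proof -
  have "(\<Sum>x\<in>{0..<n} - {v}. outdeg (A \<inter> S \<times> S) x) = (\<Sum>x\<in>{0..<n} - {v}. if x \<in> S then 1 else 0)"
    by (intro sum.cong) (simp_all add: outdeg_core)
  also have "\<dots> = card (({0..<n} - {v}) \<inter> S)"
    by (simp add: sum.If_cases)
  also have "({0..<n} - {v}) \<inter> S = S - {v}"
    using core_subset by blast
  finally show ?thesis
    using card_core center_in_core by simp
qed

lemma E_alpha_eq:
  "Re (E_alpha \<alpha> n A) = \<alpha>\<^sup>2 * (\<Sum>x = 0..<n. real ((outdeg A x)\<^sup>2))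
    + 2 * real (card {i. i < length ms \<and> ms ! i = 2}) * (1 - \<alpha>)\<^sup>2"
  using mat_trace_square_A_alpha[OF digraph, of \<alpha>] card_digon_arcs
  unfolding E_alpha_eq_mat_trace digons_in_core core_arcs by simp

lemma sum_outdeg_square_eq:
  "(\<Sum>x = 0..<n. (outdeg A x)\<^sup>2) = (length ms)\<^sup>2 + (m - 1) + (n - m)
    + (\<Sum>x = 0..<n. 2 * outdeg (A \<inter> S \<times> S) x * outdeg (A - S \<times> S) x
         + outdeg (A - S \<times> S) x * (outdeg (A - S \<times> S) x - 1))"
proof -
  have "(\<Sum>x = 0..<n. outdeg (A - S \<times> S) x) = n - m"
    using sum_outdeg_eq_card[of "A - S \<times> S" n] arcs_subset card_tree_arcs by auto
  then show ?thesis
    using sum_square_add_eq[of "{0..<n}" v "outdeg (A \<inter> S \<times> S)" "outdeg (A - S \<times> S)"]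
      center_in_core core_subset outdeg_core outdeg_core_center sum_outdeg_core_noncenter
    by (auto simp: outdeg_split)
qed

lemma sum_outdeg_square_lower:
  shows "(length ms)\<^sup>2 + (m - 1) + (n - m) \<le> (\<Sum>x = 0..<n. (outdeg A x)\<^sup>2)"
    and "(\<Sum>x = 0..<n. (outdeg A x)\<^sup>2) = (length ms)\<^sup>2 + (m - 1) + (n - m)
      \<longleftrightarrow> (\<forall>u\<in>S. in_tree_rooted (T u) (A \<inter> T u \<times> T u) u)"
proof -
  define excess where "excess x = 2 * outdeg (A \<inter> S \<times> S) x * outdeg (A - S \<times> S) x
    + outdeg (A - S \<times> S) x * (outdeg (A - S \<times> S) x - 1)" for x
  have "excess x = 0 \<longleftrightarrow> outdeg (A - S \<times> S) x \<le> 1 \<and> (x \<in> S \<longrightarrow> outdeg (A - S \<times> S) x = 0)" for x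
    using outdeg_core[of x] outdeg_core_center two_cycles center_in_core
    by (cases "x = v") (auto simp: excess_def)
  then have "(\<Sum>x = 0..<n. excess x) = 0 \<longleftrightarrow> (\<forall>u\<in>S. in_tree_rooted (T u) (A \<inter> T u \<times> T u) u)"
    unfolding in_trees_iff by simp
  then show "(length ms)\<^sup>2 + (m - 1) + (n - m) \<le> (\<Sum>x = 0..<n. (outdeg A x)\<^sup>2)"
    and "(\<Sum>x = 0..<n. (outdeg A x)\<^sup>2) = (length ms)\<^sup>2 + (m - 1) + (n - m)
      \<longleftrightarrow> (\<forall>u\<in>S. in_tree_rooted (T u) (A \<inter> T u \<times> T u) u)"
    unfolding sum_outdeg_square_eq excess_def[symmetric] by simp_all
qed

lemma sum_outdeg_square_upper:
  shows "(\<Sum>x = 0..<n. (outdeg A x)\<^sup>2) \<le> (n - m + length ms)\<^sup>2 + (m - 1)"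
    and "(\<Sum>x = 0..<n. (outdeg A x)\<^sup>2) = (n - m + length ms)\<^sup>2 + (m - 1)
      \<longleftrightarrow> A - S \<times> S = {v} \<times> ({0..<n} - S)"
proof -
  have hyps: "finite {0..<n}" "v \<in> {0..<n}"
    "\<forall>x\<in>{0..<n} - {v}. outdeg (A \<inter> S \<times> S) x \<le> 1" "2 \<le> outdeg (A \<inter> S \<times> S) v"
    using center_in_core core_subset outdeg_core outdeg_core_center two_cycles by auto
  have trees: "(\<Sum>x = 0..<n. outdeg (A - S \<times> S) x) = n - m"
    using sum_outdeg_eq_card[of "A - S \<times> S" n] arcs_subset card_tree_arcs by auto
  show "(\<Sum>x = 0..<n. (outdeg A x)\<^sup>2) \<le> (n - m + length ms)\<^sup>2 + (m - 1)"
    using sum_square_add_le(1)[OF hyps, of "outdeg (A - S \<times> S)"]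
    by (simp add: outdeg_split trees outdeg_core_center sum_outdeg_core_noncenter add.commute)
  show "(\<Sum>x = 0..<n. (outdeg A x)\<^sup>2) = (n - m + length ms)\<^sup>2 + (m - 1)
      \<longleftrightarrow> A - S \<times> S = {v} \<times> ({0..<n} - S)"
    using sum_square_add_le(2)[OF hyps, of "outdeg (A - S \<times> S)"] out_star_iff[OF center_in_core]
    by (simp add: outdeg_split trees outdeg_core_center sum_outdeg_core_noncenter add.commute)
qed

end

theorem corollary3p10:
  fixes \<alpha> :: real and ms :: "nat list" and s t n m v :: nat
    and A :: "(nat \<times> nat) set" and S :: "nat set" and T :: "nat \<Rightarrow> nat set"
  assumes "0 \<le> \<alpha>" and "\<alpha> < 1"
    and "t = length ms" and "2 \<le> t"
    and "sorted ms" and "\<forall>i<t. 2 \<le> ms ! i"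
    and "s = card {i. i < t \<and> ms ! i = 2}"
    and "m = sum_list ms - t + 1"
    and "in_class_G n m A S T"
    and "is_infty_digraph ms v S (A \<inter> S \<times> S)"
  shows "let E = Re (E_alpha \<alpha> n A);
             lower = \<alpha>\<^sup>2 * (real m - 1 + (real t)\<^sup>2) + \<alpha>\<^sup>2 * (real n - real m) + 2 * real s * (1 - \<alpha>)\<^sup>2;
             upper = \<alpha>\<^sup>2 * (real n - real m + real t)\<^sup>2 + \<alpha>\<^sup>2 * (real m - 1) + 2 * real s * (1 - \<alpha>)\<^sup>2
         in lower \<le> E \<and> E \<le> upper \<and>
            (0 < \<alpha> \<longrightarrow>
               (E = lower \<longleftrightarrow> (\<forall>u\<in>S. in_tree_rooted (T u) (A \<inter> T u \<times> T u) u)) \<and>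
               (E = upper \<longleftrightarrow> A - S \<times> S = {v} \<times> ({0..<n} - S)))"
proof -
  obtain cs where "infty_digraph ms v cs" and "S = (\<Union>i<length ms. set (cs ! i))"
    and "A \<inter> S \<times> S = (\<Union>i<length ms. cycle_arcs (cs ! i))"
    using is_infty_digraphE assms(6,10) assms(3) by blast
  moreover have "class_G n m A S T"
    using assms(9) by (rule class_G.intro)
  ultimately interpret infty_hat ms v cs n m A S T
    using assms(3,4) by (intro infty_hat.intro infty_hat_axioms.intro) auto
  define Q where "Q = (\<Sum>x = 0..<n. (outdeg A x)\<^sup>2)"
  define L where "L = t\<^sup>2 + (m - 1) + (n - m)"
  define U where "U = (n - m + t)\<^sup>2 + (m - 1)"
  have E: "Re (E_alpha \<alpha> n A) = \<alpha>\<^sup>2 * real Q + 2 * real s * (1 - \<alpha>)\<^sup>2"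
    unfolding E_alpha_eq Q_def assms(3,7) by simp
  have lower: "\<alpha>\<^sup>2 * (real m - 1 + (real t)\<^sup>2) + \<alpha>\<^sup>2 * (real n - real m) + 2 * real s * (1 - \<alpha>)\<^sup>2
      = \<alpha>\<^sup>2 * real L + 2 * real s * (1 - \<alpha>)\<^sup>2"
    using two_le_m m_le_n unfolding L_def by (simp add: algebra_simps)
  have upper: "\<alpha>\<^sup>2 * (real n - real m + real t)\<^sup>2 + \<alpha>\<^sup>2 * (real m - 1) + 2 * real s * (1 - \<alpha>)\<^sup>2
      = \<alpha>\<^sup>2 * real U + 2 * real s * (1 - \<alpha>)\<^sup>2"
    using two_le_m m_le_n unfolding U_def by (simp add: algebra_simps)
  have "L \<le> Q" "Q \<le> U"
    and "Q = L \<longleftrightarrow> (\<forall>u\<in>S. in_tree_rooted (T u) (A \<inter> T u \<times> T u) u)"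
    and "Q = U \<longleftrightarrow> A - S \<times> S = {v} \<times> ({0..<n} - S)"
    using sum_outdeg_square_lower sum_outdeg_square_upper unfolding Q_def L_def U_def assms(3) by auto
  then show ?thesis
    unfolding Let_def E lower upper by (auto simp: mult_left_mono)
qed

end
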